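(* Let $n,r\ge 1$, ${\bf A}\in\mathbb{H}^n$, $g\in\mathcal{G}$, and ${\bf X}_0\in\mathbb{C}^{n\times r}$. Define $${\bf U}_1({\bf X})={\bf X}^{\mathrm H}{\bf A}^{(+)}{\bf X}+{\bf X}^{\mathrm H}{\bf A}^{(-)}{\bf X}_0+{\bf X}_0^{\mathrm H}{\bf A}^{(-)}{\bf X}-{\bf X}_0^{\mathrm H}{\bf A}^{(-)}{\bf X}_0,$$ $${\bf U}_2({\bf X})={\bf X}^{\mathrm H}{\bf A}^{(-)}{\bf X}+{\bf X}^{\mathrm H}{\bf A}^{(+)}{\bf X}_0+{\bf X}_0^{\mathrm H}{\bf A}^{(+)}{\bf X}-{\bf X}_0^{\mathrm H}{\bf A}^{(+)}{\bf X}_0,$$ and $u({\bf X};{\bf X}_0)=g({\bf U}_1({\bf X}))$ if $g$ is MND, $u({\bf X};{\bf X}_0)=g({\bf U}_2({\bf X}))$ if $g$ is MNI. Then: (i) $u(\cdot;{\bf X}_0)$ is convex on $\mathbb{C}^{n\times r}$ (viewed as a real vector space); (ii) $u({\bf X};{\bf X}_0)\ge g({\bf X}^{\mathrm H}{\bf A}{\bf X})$ for all ${\bf X}\in\mathbb{C}^{n\times r}$; (iii) $u({\bf X}_0;{\bf X}_0)=g({\bf X}_0^{\mathrm H}{\bf A}{\bf X}_0)$; (iv) the functions ${\bf X}\mapsto u({\bf X};{\bf X}_0)$ and ${\bf X}\mapsto g({\bf X}^{\mathrm H}{\bf A}{\bf X})$ have the same (real Fréchet) derivative at ${\bf X}={\bf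 X}_0$.
   Context: $\mathbb{H}^m$ denotes the real vector space of $m\times m$ complex Hermitian matrices, with inner product $\langle{\bf U},{\bf V}\rangle=\mathrm{tr}({\bf U}{\bf V})$; ${\bf U}\succeq{\bf V}$ means ${\bf U}-{\bf V}$ is positive semidefinite. For ${\bf A}\in\mathbb{H}^n$ with eigen-decomposition ${\bf A}=\sum_i\lambda_i{\bf u}_i{\bf u}_i^{\mathrm H}$ (orthonormal ${\bf u}_i$), ${\bf A}^{(+)}=\sum_{\lambda_i>0}\lambda_i{\bf u}_i{\bf u}_i^{\mathrm H}$ and ${\bf A}^{(-)}=\sum_{\lambda_i<0}\lambda_i{\bf u}_i{\bf u}_i^{\mathrm H}$, so ${\bf A}={\bf A}^{(+)}+{\bf A}^{(-)}$. A function $g:\mathbb{H}^r\to\mathbb{R}$ is MND (matrix nondecreasing) if ${\bf W}_1\succeq{\bf W}_2\Rightarrow g({\bf W}_1)\ge g({\bf W}_2)$, and MNI (matrix nonincreasing) if ${\bf W}_1\succeq{\bf W}_2\Rightarrow g({\bf W}_1)\le g({\bf W}_2)$. $\mathcal{G}$ is the family of differentiable convex functions $g:\mathbb{H}^r\to\mathbb{R}$ that are MND or MNI. *)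

theory Defs
  imports "HOL-Analysis.Analysis"
begin

definition adj :: "complex^'n^'m \<Rightarrow> complex^'m^'n" where
  "adj X = (\<chi> i j. cnj (X $ j $ i))"

definition hermitian :: "complex^'n^'n \<Rightarrow> bool" where
  "hermitian M \<longleftrightarrow> adj M = M"

definition herm_set :: "(complex^'n^'n) set" where
  "herm_set = {M. hermitian M}"

definition qform :: "complex^'n^'n \<Rightarrow> complex^'n \<Rightarrow> complex" where
  "qform M v = (\<Sum>i\<in>UNIV. \<Sum>j\<in>UNIV. cnj (v $ i) * M $ i $ j * v $ j)"

definition psd :: "complex^'n^'n \<Rightarrow> bool" where
  "psd M \<longleftrightarrow> hermitian M \<and> (\<forall>v. 0 \<le> Re (qform M v))"

definition loewner_ge :: "complex^'n^'n \<Rightarrow> complex^'n^'n \<Rightarrow> bool" where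
  "loewner_ge U V \<longleftrightarrow> psd (U - V)"

definition MND :: "(complex^'r^'r \<Rightarrow> real) \<Rightarrow> bool" where
  "MND g \<longleftrightarrow> (\<forall>W1\<in>herm_set. \<forall>W2\<in>herm_set. loewner_ge W1 W2 \<longrightarrow> g W1 \<ge> g W2)"

definition MNI :: "(complex^'r^'r \<Rightarrow> real) \<Rightarrow> bool" where
  "MNI g \<longleftrightarrow> (\<forall>W1\<in>herm_set. \<forall>W2\<in>herm_set. loewner_ge W1 W2 \<longrightarrow> g W1 \<le> g W2)"

text \<open>The family G: differentiable convex functions on H^r that are MND or MNI.
  g is a function on all r x r complex matrices, but only its values on H^r matter;
  convexity and (real Frechet) differentiability are relative to H^r.\<close>
definition in_G :: "(complex^'r^'r \<Rightarrow> real) \<Rightarrow> bool" where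
  "in_G g \<longleftrightarrow> convex_on herm_set g \<and> (\<forall>W\<in>herm_set. g differentiable (at W within herm_set))
              \<and> (MND g \<or> MNI g)"

definition outer :: "complex^'n \<Rightarrow> complex^'n^'n" where
  "outer v = (\<chi> a b. v $ a * cnj (v $ b))"

definition eigen_decomp :: "complex^'n^'n \<Rightarrow> ('n \<Rightarrow> complex^'n) \<Rightarrow> ('n \<Rightarrow> real) \<Rightarrow> bool" where
  "eigen_decomp A u lam \<longleftrightarrow>
     (\<forall>i j. (\<Sum>k\<in>UNIV. cnj (u i $ k) * u j $ k) = (if i = j then 1 else 0)) \<and>
     A = (\<Sum>i\<in>UNIV. (\<chi> a b. complex_of_real (lam i) * outer (u i) $ a $ b))"

definition pos_part :: "('n \<Rightarrow> complex^'n) \<Rightarrow> ('n \<Rightarrow> real) \<Rightarrow> complex^'n^'n" where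
  "pos_part u lam = (\<Sum>i\<in>{i. lam i > 0}. (\<chi> a b. complex_of_real (lam i) * outer (u i) $ a $ b))"

definition neg_part :: "('n \<Rightarrow> complex^'n) \<Rightarrow> ('n \<Rightarrow> real) \<Rightarrow> complex^'n^'n" where
  "neg_part u lam = (\<Sum>i\<in>{i. lam i < 0}. (\<chi> a b. complex_of_real (lam i) * outer (u i) $ a $ b))"

end

theory Submission
  imports Defs
begin

text \<open>Split \<open>A = A\<^sup>+ + A\<^sup>-\<close>, so that \<open>X\<^sup>H A X\<close> is the sum of the Loewner-convex map
  \<open>X\<^sup>H A\<^sup>+ X\<close> and the Loewner-concave map \<open>X\<^sup>H A\<^sup>- X\<close>. Replacing the concave part by its
  tangent at \<open>X\<^sub>0\<close> gives \<open>U\<^sub>1\<close>: it is Loewner-convex, and it exceeds \<open>X\<^sup>H A X\<close> by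
  \<open>-(X - X\<^sub>0)\<^sup>H A\<^sup>- (X - X\<^sub>0) \<succeq> 0\<close>, a gap vanishing to second order at \<open>X\<^sub>0\<close>. A convex MND
  function \<open>g\<close> preserves Loewner-convexity and order, and the chain rule gives equal derivatives.
  The MNI case is the MND case for \<open>W \<mapsto> g(-W)\<close> and \<open>-A\<close>, whose positive and negative parts
  are \<open>-A\<^sup>-\<close> and \<open>-A\<^sup>+\<close>; this turns \<open>U\<^sub>1\<close> into \<open>-U\<^sub>2\<close>.\<close>

lemma adj_nth [simp]: "adj X $ i $ j = cnj (X $ j $ i)"
  by (simp add: adj_def)

lemma adj_adj [simp]: "adj (adj X) = X"
  by (simp add: vec_eq_iff)

lemma adj_add: "adj (X + Y) = adj X + adj Y"
  by (simp add: vec_eq_iff)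

lemma adj_diff: "adj (X - Y) = adj X - adj Y"
  by (simp add: vec_eq_iff)

lemma adj_uminus: "adj (- X) = - adj X"
  by (simp add: vec_eq_iff)

lemma scaleR_matrix_nth [simp]: "(c *\<^sub>R (X :: complex^'m^'n)) $ i $ j = of_real c * X $ i $ j"
  by (simp only: vector_scaleR_component) (simp add: scaleR_conv_of_real)

lemma adj_scaleR: "adj (c *\<^sub>R X) = c *\<^sub>R adj X"
  by (simp add: vec_eq_iff)

lemma adj_matrix_mult: "adj (A ** B) = adj B ** adj A"
  by (simp add: vec_eq_iff matrix_matrix_mult_def cnj_sum mult.commute)

lemma matrix_add_rdistrib: "((A :: 'a::semiring_1^'n^'m) + B) ** C = A ** C + B ** C"
  by (simp add: vec_eq_iff matrix_matrix_mult_def algebra_simps sum.distrib)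

lemma matrix_uminus_left: "(- (A :: 'a::ring_1^'n^'m)) ** B = - (A ** B)"
  by (simp add: vec_eq_iff matrix_matrix_mult_def sum_negf)

lemma matrix_uminus_right: "(A :: 'a::ring_1^'n^'m) ** (- B) = - (A ** B)"
  by (simp add: vec_eq_iff matrix_matrix_mult_def sum_negf)

lemma matrix_scaleR_left: "(c *\<^sub>R (A :: complex^'n^'m)) ** B = c *\<^sub>R (A ** B)"
  by (simp add: vec_eq_iff matrix_matrix_mult_def sum_distrib_left mult.assoc scaleR_sum_right)

lemma matrix_scaleR_right: "(A :: complex^'n^'m) ** (c *\<^sub>R B) = c *\<^sub>R (A ** B)"
  by (simp add: vec_eq_iff matrix_matrix_mult_def sum_distrib_left mult.left_commute
      scaleR_sum_right)

definition cinner :: "complex^'n \<Rightarrow> complex^'n \<Rightarrow> complex" where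
  "cinner v w = (\<Sum>i\<in>UNIV. cnj (v $ i) * w $ i)"

lemma qform_cinner: "qform M v = cinner v (M *v v)"
  by (simp add: qform_def cinner_def matrix_vector_mult_def sum_distrib_left mult.assoc)

lemma cinner_adj_right: "cinner v (adj M *v w) = cinner (M *v v) w"
proof -
  have "cinner v (adj M *v w)
      = (\<Sum>i\<in>UNIV. \<Sum>k\<in>UNIV. cnj (v $ i) * cnj (M $ k $ i) * w $ k)"
    by (simp add: cinner_def matrix_vector_mult_def sum_distrib_left mult.assoc)
  also have "\<dots> = (\<Sum>k\<in>UNIV. \<Sum>i\<in>UNIV. cnj (v $ i) * cnj (M $ k $ i) * w $ k)"
    by (rule sum.swap)
  also have "\<dots> = cinner (M *v v) w"
    by (simp add: cinner_def matrix_vector_mult_def sum_distrib_left sum_distrib_right cnj_sum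
        mult.commute mult.left_commute)
  finally show ?thesis .
qed

lemma qform_congruence: "qform (adj X ** M ** X) v = qform M (X *v v)"
  by (simp add: qform_cinner cinner_adj_right flip: matrix_vector_mul_assoc)

lemma qform_add: "qform (A + B) v = qform A v + qform B v"
  by (simp add: qform_def algebra_simps sum.distrib)

lemma qform_scaleR: "qform (c *\<^sub>R A) v = of_real c * qform A v"
  by (simp add: qform_def sum_distrib_left) (simp add: scaleR_conv_of_real mult_ac)

lemma hermitian_add: "hermitian A \<Longrightarrow> hermitian B \<Longrightarrow> hermitian (A + B)"
  by (simp add: hermitian_def adj_add)

lemma hermitian_uminus: "hermitian A \<Longrightarrow> hermitian (- A)"
  by (simp add: hermitian_def adj_uminus)

lemma hermitian_scaleR: "hermitian A \<Longrightarrow> hermitian (c *\<^sub>R A)"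
  by (simp add: hermitian_def adj_scaleR)

lemma mem_herm_set [simp]: "M \<in> herm_set \<longleftrightarrow> hermitian M"
  by (simp add: herm_set_def)

lemma psd_imp_hermitian: "psd M \<Longrightarrow> hermitian M"
  by (simp add: psd_def)

lemma psd_uminus_imp_hermitian: "psd (- M) \<Longrightarrow> hermitian M"
  using hermitian_uminus[of "- M"] by (simp add: psd_def)

lemma psd_add: "psd A \<Longrightarrow> psd B \<Longrightarrow> psd (A + B)"
  by (simp add: psd_def hermitian_add qform_add)

lemma psd_scaleR: "psd A \<Longrightarrow> 0 \<le> c \<Longrightarrow> psd (c *\<^sub>R A)"
  by (simp add: psd_def hermitian_scaleR qform_scaleR)

lemma psd_zero: "psd 0"
  by (simp add: psd_def hermitian_def vec_eq_iff qform_def)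

lemma psd_sum: "(\<And>i. i \<in> S \<Longrightarrow> psd (f i)) \<Longrightarrow> psd (sum f S)"
  by (induction S rule: infinite_finite_induct) (auto simp: psd_zero psd_add)

lemma psd_congruence: "psd M \<Longrightarrow> psd (adj X ** M ** X)"
  by (simp add: psd_def hermitian_def qform_congruence adj_matrix_mult matrix_mul_assoc)

lemma psd_outer: "psd (outer v)"
proof -
  have "qform (outer v) w = cinner w v * cnj (cinner w v)" for w
    by (simp add: qform_def cinner_def outer_def sum_distrib_left sum_distrib_right cnj_sum mult_ac)
      (subst sum.swap, simp add: mult_ac)
  then show ?thesis
    by (simp add: psd_def hermitian_def outer_def vec_eq_iff mult.commute complex_mult_cnj)
qed

lemma eigen_term_eq: "(\<chi> a b. complex_of_real c * outer v $ a $ b) = c *\<^sub>R outer v"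
  by (simp add: vec_eq_iff) (simp add: scaleR_conv_of_real)

lemma psd_pos_part: "psd (pos_part u lam)"
  unfolding pos_part_def eigen_term_eq by (rule psd_sum) (auto intro: psd_scaleR psd_outer)

lemma psd_uminus_neg_part: "psd (- neg_part u lam)"
proof -
  have "- neg_part u lam = (\<Sum>i\<in>{i. lam i < 0}. (- lam i) *\<^sub>R outer (u i))"
    unfolding neg_part_def eigen_term_eq by (simp add: sum_negf)
  also have "psd \<dots>"
    by (rule psd_sum, rule psd_scaleR[OF psd_outer]) simp
  finally show ?thesis .
qed

lemma eigen_decomp_pos_neg_part:
  assumes "eigen_decomp A u lam"
  shows "A = pos_part u lam + neg_part u lam"
proof -
  let ?f = "\<lambda>i. lam i *\<^sub>R outer (u i)"
  have "A = (\<Sum>i\<in>UNIV. ?f i)"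
    using assms unfolding eigen_decomp_def eigen_term_eq by simp
  also have "\<dots> = (\<Sum>i\<in>{i. lam i > 0} \<union> {i. lam i < 0}. ?f i)"
    by (rule sum.mono_neutral_right) auto
  also have "\<dots> = (\<Sum>i\<in>{i. lam i > 0}. ?f i) + (\<Sum>i\<in>{i. lam i < 0}. ?f i)"
    by (rule sum.union_disjoint) auto
  finally show ?thesis unfolding pos_part_def neg_part_def eigen_term_eq .
qed

definition sesq_form :: "complex^'n^'n \<Rightarrow> complex^'r^'n \<Rightarrow> complex^'r^'n \<Rightarrow> complex^'r^'r" where
  "sesq_form M X Y = adj X ** M ** Y"

lemma bilinear_sesq_form: "bilinear (sesq_form M)"
  unfolding bilinear_def sesq_form_def
  by (auto intro!: linearI simp: adj_add adj_scaleR matrix_add_rdistrib matrix_add_ldistrib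
      matrix_scaleR_left matrix_scaleR_right)

lemma bounded_bilinear_sesq_form: "bounded_bilinear (sesq_form M)"
  using bilinear_sesq_form bilinear_conv_bounded_bilinear by blast

lemma sesq_form_add_matrix: "sesq_form (M1 + M2) X Y = sesq_form M1 X Y + sesq_form M2 X Y"
  by (simp add: sesq_form_def matrix_add_ldistrib matrix_add_rdistrib)

lemma sesq_form_uminus_matrix: "sesq_form (- M) X Y = - sesq_form M X Y"
  by (simp add: sesq_form_def matrix_uminus_left matrix_uminus_right)

lemma adj_sesq_form: "hermitian M \<Longrightarrow> adj (sesq_form M X Y) = sesq_form M Y X"
  by (simp add: hermitian_def sesq_form_def adj_matrix_mult matrix_mul_assoc)

lemma hermitian_sesq_form_diag: "hermitian M \<Longrightarrow> hermitian (sesq_form M X X)"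
  by (simp add: hermitian_def adj_sesq_form)

lemma psd_sesq_form_diag: "psd M \<Longrightarrow> psd (sesq_form M X X)"
  unfolding sesq_form_def by (rule psd_congruence)

lemma sesq_form_diag_has_derivative:
  "((\<lambda>X. sesq_form M X X) has_derivative (\<lambda>H. sesq_form M X0 H + sesq_form M H X0)) (at X0)"
  using bounded_bilinear.FDERIV[OF bounded_bilinear_sesq_form has_derivative_ident
      has_derivative_ident, of M X0 UNIV]
  by simp

text \<open>With \<open>M\<^sub>1 = A\<^sup>+, M\<^sub>2 = A\<^sup>-\<close> this is \<open>U\<^sub>1\<close>, with \<open>M\<^sub>1 = A\<^sup>-, M\<^sub>2 = A\<^sup>+\<close> it is \<open>U\<^sub>2\<close>.\<close>
definition tangent_majorant ::
    "complex^'n^'n \<Rightarrow> complex^'n^'n \<Rightarrow> complex^'r^'n \<Rightarrow> complex^'r^'n \<Rightarrow> complex^'r^'r" where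
  "tangent_majorant M1 M2 X0 X =
     sesq_form M1 X X + sesq_form M2 X X0 + sesq_form M2 X0 X - sesq_form M2 X0 X0"

lemma tangent_majorant_gap:
  "tangent_majorant M1 M2 X0 X - sesq_form (M1 + M2) X X = sesq_form (- M2) (X - X0) (X - X0)"
  by (simp add: tangent_majorant_def sesq_form_add_matrix sesq_form_uminus_matrix algebra_simps
      bilinear_lsub[OF bilinear_sesq_form] bilinear_rsub[OF bilinear_sesq_form])

lemma tangent_majorant_base: "tangent_majorant M1 M2 X0 X0 = sesq_form (M1 + M2) X0 X0"
  by (simp add: tangent_majorant_def sesq_form_add_matrix)

lemma tangent_majorant_uminus:
  "tangent_majorant (- M1) (- M2) X0 X = - tangent_majorant M1 M2 X0 X"
  by (simp add: tangent_majorant_def sesq_form_uminus_matrix)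

lemma hermitian_tangent_majorant:
  "hermitian M1 \<Longrightarrow> hermitian M2 \<Longrightarrow> hermitian (tangent_majorant M1 M2 X0 X)"
  by (simp add: tangent_majorant_def hermitian_def adj_add adj_diff adj_sesq_form)

text \<open>The tangent terms are affine in \<open>X\<close>, so only the \<open>M\<^sub>1\<close>-part contributes to the defect
  of convexity.\<close>
lemma tangent_majorant_convex_combination:
  assumes "a + b = 1"
  shows "a *\<^sub>R tangent_majorant M1 M2 X0 X + b *\<^sub>R tangent_majorant M1 M2 X0 Y
      - tangent_majorant M1 M2 X0 (a *\<^sub>R X + b *\<^sub>R Y) = (a * b) *\<^sub>R sesq_form M1 (X - Y) (X - Y)"
proof -
  have b: "b = 1 - a" using assms by simp
  note bil = bilinear_sesq_form
  show ?thesis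
    unfolding tangent_majorant_def b
    by (simp add: bilinear_ladd[OF bil] bilinear_radd[OF bil] bilinear_lmul[OF bil]
        bilinear_rmul[OF bil] bilinear_lsub[OF bil] bilinear_rsub[OF bil] algebra_simps)
qed

lemma tangent_majorant_has_derivative:
  "(tangent_majorant M1 M2 X0 has_derivative
      (\<lambda>H. sesq_form (M1 + M2) X0 H + sesq_form (M1 + M2) H X0)) (at X0)"
proof -
  note bb = bounded_bilinear_sesq_form[of M2]
  have "((\<lambda>X. sesq_form M1 X X + sesq_form M2 X X0 + sesq_form M2 X0 X - sesq_form M2 X0 X0)
      has_derivative (\<lambda>H. (sesq_form M1 X0 H + sesq_form M1 H X0) + sesq_form M2 H X0
        + sesq_form M2 X0 H - 0)) (at X0)"
    by (intro has_derivative_diff has_derivative_add sesq_form_diag_has_derivative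
        has_derivative_const bounded_linear_imp_has_derivative
        bounded_bilinear.bounded_linear_left[OF bb] bounded_bilinear.bounded_linear_right[OF bb])
  then show ?thesis
    unfolding tangent_majorant_def[abs_def]
    by (rule has_derivative_eq_rhs) (auto simp: sesq_form_add_matrix algebra_simps)
qed

lemma MND_le: "MND g \<Longrightarrow> hermitian V \<Longrightarrow> hermitian W \<Longrightarrow> psd (V - W) \<Longrightarrow> g W \<le> g V"
  by (simp add: MND_def loewner_ge_def)

lemma MNI_imp_MND_uminus: "MNI g \<Longrightarrow> MND (\<lambda>W. g (- W))"
  by (simp add: MND_def MNI_def loewner_ge_def hermitian_uminus)

lemma uminus_herm_set: "uminus ` herm_set = herm_set"
  using hermitian_uminus by (force simp: image_iff)

lemma convex_on_herm_set_comp_uminus: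
  fixes g :: "complex^'n^'n \<Rightarrow> real"
  assumes "convex_on herm_set g"
  shows "convex_on herm_set (\<lambda>W. g (- W))"
  unfolding convex_on_def
proof (intro conjI ballI allI impI)
  fix V W :: "complex^'n^'n" and a b :: real
  assume "V \<in> herm_set" "W \<in> herm_set" and ab: "0 \<le> a" "0 \<le> b" "a + b = 1"
  then have "- V \<in> herm_set" "- W \<in> herm_set"
    by (simp_all add: hermitian_uminus)
  then have "g (a *\<^sub>R (- V) + b *\<^sub>R (- W)) \<le> a * g (- V) + b * g (- W)"
    using assms ab unfolding convex_on_def by blast
  then show "g (- (a *\<^sub>R V + b *\<^sub>R W)) \<le> a * g (- V) + b * g (- W)"
    by simp
qed (use assms convex_on_imp_convex in blast)

lemma differentiable_herm_set_comp_uminus: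
  assumes "g differentiable (at (- W) within herm_set)"
  shows "(\<lambda>W. g (- W)) differentiable (at W within herm_set)"
  using differentiable_chain_within[of uminus W herm_set g] assms
  by (simp add: uminus_herm_set o_def)

definition convex_surrogate :: "('a::real_normed_vector \<Rightarrow> real) \<Rightarrow> ('a \<Rightarrow> real) \<Rightarrow> 'a \<Rightarrow> bool" where
  "convex_surrogate v f x0 \<longleftrightarrow> convex_on UNIV v \<and> (\<forall>x. f x \<le> v x) \<and> v x0 = f x0
     \<and> (\<exists>D. (v has_derivative D) (at x0) \<and> (f has_derivative D) (at x0))"

lemma convex_on_MND_tangent_majorant:
  fixes g :: "complex^'r^'r \<Rightarrow> real" and X0 :: "complex^'r^'n"
  assumes g: "MND g" "convex_on herm_set g" and M: "psd M1" "hermitian M2"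
  shows "convex_on UNIV (\<lambda>X. g (tangent_majorant M1 M2 X0 X))"
  unfolding convex_on_def
proof (intro conjI ballI allI impI)
  let ?V = "tangent_majorant M1 M2 X0"
  fix X Y :: "complex^'r^'n" and a b :: real
  assume ab: "0 \<le> a" "0 \<le> b" "a + b = 1"
  have herm: "hermitian (?V Z)" for Z
    using M by (simp add: hermitian_tangent_majorant psd_imp_hermitian)
  have "g (?V (a *\<^sub>R X + b *\<^sub>R Y)) \<le> g (a *\<^sub>R ?V X + b *\<^sub>R ?V Y)"
    using ab M
    by (intro MND_le[OF g(1)])
      (simp_all add: herm hermitian_add hermitian_scaleR tangent_majorant_convex_combination
        psd_scaleR psd_sesq_form_diag)
  also have "\<dots> \<le> a * g (?V X) + b * g (?V Y)"
    using g(2) ab herm unfolding convex_on_def by simp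
  finally show "g (?V (a *\<^sub>R X + b *\<^sub>R Y)) \<le> a * g (?V X) + b * g (?V Y)" .
qed simp

lemma MND_le_tangent_majorant:
  assumes "MND g" "hermitian M1" "psd (- M2)"
  shows "g (sesq_form (M1 + M2) X X) \<le> g (tangent_majorant M1 M2 X0 X)"
  using assms
  by (intro MND_le) (simp_all add: tangent_majorant_gap psd_sesq_form_diag hermitian_add
      hermitian_tangent_majorant hermitian_sesq_form_diag psd_uminus_imp_hermitian)

lemma tangent_majorant_comp_has_derivative:
  assumes g: "g differentiable (at (sesq_form (M1 + M2) X0 X0) within herm_set)"
    and M: "hermitian M1" "hermitian M2"
  shows "\<exists>D. ((\<lambda>X. g (tangent_majorant M1 M2 X0 X)) has_derivative D) (at X0)
    \<and> ((\<lambda>X. g (sesq_form (M1 + M2) X X)) has_derivative D) (at X0)"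
proof -
  let ?L = "\<lambda>H. sesq_form (M1 + M2) X0 H + sesq_form (M1 + M2) H X0"
  obtain g' where g': "(g has_derivative g') (at (sesq_form (M1 + M2) X0 X0) within herm_set)"
    using g unfolding differentiable_def by blast
  have "range (tangent_majorant M1 M2 X0) \<subseteq> herm_set"
    "range (\<lambda>X. sesq_form (M1 + M2) X X) \<subseteq> herm_set"
    using M by (auto simp: hermitian_tangent_majorant hermitian_sesq_form_diag hermitian_add)
  then have gV: "(g has_derivative g')
      (at (tangent_majorant M1 M2 X0 X0) within range (tangent_majorant M1 M2 X0))"
    and gQ: "(g has_derivative g')
      (at (sesq_form (M1 + M2) X0 X0) within range (\<lambda>X. sesq_form (M1 + M2) X X))"
    using g' by (auto simp: tangent_majorant_base intro: has_derivative_subset)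
  have "((\<lambda>X. g (tangent_majorant M1 M2 X0 X)) has_derivative (\<lambda>H. g' (?L H)))
      (at X0 within UNIV)"
    by (rule has_derivative_in_compose[OF _ gV]) (simp add: tangent_majorant_has_derivative)
  moreover have "((\<lambda>X. g (sesq_form (M1 + M2) X X)) has_derivative (\<lambda>H. g' (?L H)))
      (at X0 within UNIV)"
    by (rule has_derivative_in_compose[OF _ gQ]) (simp add: sesq_form_diag_has_derivative)
  ultimately show ?thesis
    by blast
qed

lemma convex_surrogate_MND_tangent_majorant:
  assumes g: "MND g" "convex_on herm_set g"
      "\<forall>W\<in>herm_set. g differentiable (at W within herm_set)"
    and M: "psd M1" "psd (- M2)"
  shows "convex_surrogate (\<lambda>X. g (tangent_majorant M1 M2 X0 X))
    (\<lambda>X. g (sesq_form (M1 + M2) X X)) X0"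
proof -
  have herm: "hermitian M1" "hermitian M2"
    using M by (simp_all add: psd_imp_hermitian psd_uminus_imp_hermitian)
  then have "g differentiable (at (sesq_form (M1 + M2) X0 X0) within herm_set)"
    using g(3) by (simp add: hermitian_sesq_form_diag hermitian_add)
  then show ?thesis
    unfolding convex_surrogate_def
    using convex_on_MND_tangent_majorant[OF g(1,2) M(1) herm(2)]
      MND_le_tangent_majorant[OF g(1) herm(1) M(2)] tangent_majorant_comp_has_derivative[OF _ herm]
    by (simp add: tangent_majorant_base)
qed

lemma convex_surrogate_MNI_tangent_majorant:
  assumes g: "MNI g" "convex_on herm_set g"
      "\<forall>W\<in>herm_set. g differentiable (at W within herm_set)"
    and M: "psd (- M1)" "psd M2"
  shows "convex_surrogate (\<lambda>X. g (tangent_majorant M1 M2 X0 X))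
    (\<lambda>X. g (sesq_form (M1 + M2) X X)) X0"
proof -
  have "\<forall>W\<in>herm_set. (\<lambda>W. g (- W)) differentiable (at W within herm_set)"
    using g(3) by (auto intro: differentiable_herm_set_comp_uminus simp: hermitian_uminus)
  then have "convex_surrogate (\<lambda>X. g (- tangent_majorant (- M1) (- M2) X0 X))
      (\<lambda>X. g (- sesq_form (- M1 + - M2) X X)) X0"
    using g M
    by (intro convex_surrogate_MND_tangent_majorant[where g = "\<lambda>W. g (- W)"])
      (simp_all add: MNI_imp_MND_uminus convex_on_herm_set_comp_uminus)
  then show ?thesis
    by (simp only: tangent_majorant_uminus sesq_form_uminus_matrix minus_minus
        minus_add_distrib[symmetric])
qed

theorem theorem2:
  fixes A :: "complex^'n^'n"
    and u :: "'n \<Rightarrow> complex^'n" and lam :: "'n \<Rightarrow> real"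
    and g :: "complex^'r^'r \<Rightarrow> real"
    and X0 :: "complex^'r^'n"
    and U1 U2 :: "complex^'r^'n \<Rightarrow> complex^'r^'r"
    and uu :: "complex^'r^'n \<Rightarrow> real"
  assumes "hermitian A"
    and "eigen_decomp A u lam"
    and "in_G g"
    and "U1 = (\<lambda>X. adj X ** pos_part u lam ** X + adj X ** neg_part u lam ** X0
                    + adj X0 ** neg_part u lam ** X - adj X0 ** neg_part u lam ** X0)"
    and "U2 = (\<lambda>X. adj X ** neg_part u lam ** X + adj X ** pos_part u lam ** X0
                    + adj X0 ** pos_part u lam ** X - adj X0 ** pos_part u lam ** X0)"
    and "(MND g \<and> uu = (\<lambda>X. g (U1 X))) \<or> (MNI g \<and> uu = (\<lambda>X. g (U2 X)))"
  shows "convex_on UNIV uu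
    \<and> (\<forall>X. uu X \<ge> g (adj X ** A ** X))
    \<and> uu X0 = g (adj X0 ** A ** X0)
    \<and> (\<exists>D. (uu has_derivative D) (at X0) \<and> ((\<lambda>X. g (adj X ** A ** X)) has_derivative D) (at X0))"
proof -
  let ?P = "pos_part u lam" and ?N = "neg_part u lam"
  have g: "convex_on herm_set g" "\<forall>W\<in>herm_set. g differentiable (at W within herm_set)"
    using assms(3) by (simp_all add: in_G_def)
  have A: "adj X ** A ** X = sesq_form (?P + ?N) X X" "adj X ** A ** X = sesq_form (?N + ?P) X X"
    for X
    using eigen_decomp_pos_neg_part[OF assms(2)] by (simp_all add: sesq_form_def add.commute)
  from assms(6) have "convex_surrogate uu (\<lambda>X. g (adj X ** A ** X)) X0"
  proof
    assume "MND g \<and> uu = (\<lambda>X. g (U1 X))"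
    then show ?thesis
      using convex_surrogate_MND_tangent_majorant[OF _ g psd_pos_part psd_uminus_neg_part] assms(4)
      by (simp add: A(1) tangent_majorant_def sesq_form_def)
  next
    assume "MNI g \<and> uu = (\<lambda>X. g (U2 X))"
    then show ?thesis
      using convex_surrogate_MNI_tangent_majorant[OF _ g psd_uminus_neg_part psd_pos_part] assms(5)
      by (simp add: A(2) tangent_majorant_def sesq_form_def)
  qed
  then show ?thesis
    by (simp add: convex_surrogate_def)
qed

end
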